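(* Let $({\cal A},{\cal A}_0)$ be a locally convex quasi *-algebra with identity and topology $\tau$, let $\omega_0$ be a positive linear functional on ${\cal A}_0$ with $\omega_0(a^*a)\le p(a)^2$ for all $a\in{\cal A}_0$ for some $\tau$-continuous seminorm $p$, let $\omega=\tilde\omega_0$ be its continuous extension to ${\cal A}$ and $\pi_\omega$ its GNS representation. Then $\pi_\omega({\cal A})'_w=\pi_\omega({\cal A}_0)'_w$.
   Context: A locally convex quasi *-algebra $({\cal A},{\cal A}_0)$: ${\cal A}_0$ is a *-algebra with a locally convex topology $\tau$ making the involution and the multiplications $a\mapsto ab$, $a\mapsto ba$ ($b\in{\cal A}_0$) continuous, ${\cal A}$ is the $\tau$-completion with involution and products $ax,xa$ ($a\in{\cal A},x\in{\cal A}_0$) extended by continuity. GNS construction of $\omega$: Hilbert space ${\cal H}_\omega$, linear $\lambda_\omega:{\cal A}\to{\cal H}_\omega$ with ${\cal D}:=\lambda_\omega({\cal A}_0)$ dense and $\langle\lambda_\omega(x),\lambda_\omega(a)\rangle=\omega(a^*x)$, and $\pi_\omega(x)$, $x\in{\cal A}$, the operator on ${\cal D}$ given by $\pi_\omega(x)\lambda_\omega(a)=\lambda_\omega(xa)$, with $\pi_\omega(x)^\dagger:=\pi_\omega(x)^*\upharpoonright{\cal D}=\pi_\omega(x^* )$. For a *-invariant set ${\mathfrak M}$ of operators with domain ${\cal D}$, the weak commutant is ${\mathfrak M}'_w=\{C\in{\cal B}({\cal H}_\omega):\langle X\xi,C^*\eta\rangle=\langle C\xi,X^\dagger\eta\rangle\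 \forall X\in{\mathfrak M},\ \xi,\eta\in{\cal D}\}$. *)

theory Defs
  imports "HOL-Analysis.Analysis"
begin

definition hnorm :: "('h \<Rightarrow> 'h \<Rightarrow> complex) \<Rightarrow> 'h \<Rightarrow> real" where
  "hnorm ip x = sqrt (Re (ip x x))"

definition hilbert_space ::
  "(complex \<Rightarrow> 'h::ab_group_add \<Rightarrow> 'h) \<Rightarrow> ('h \<Rightarrow> 'h \<Rightarrow> complex) \<Rightarrow> bool" where
  "hilbert_space sc ip \<longleftrightarrow>
     vector_space sc \<and>
     (\<forall>x y z. ip (x + y) z = ip x z + ip y z) \<and>
     (\<forall>c x y. ip (sc c x) y = c * ip x y) \<and>
     (\<forall>x y. ip y x = cnj (ip x y)) \<and>
     (\<forall>x. Im (ip x x) = 0 \<and> Re (ip x x) \<ge> 0) \<and>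
     (\<forall>x. ip x x = 0 \<longrightarrow> x = 0) \<and>
     (\<forall>X :: nat \<Rightarrow> 'h. (\<forall>e>0. \<exists>N. \<forall>m\<ge>N. \<forall>n\<ge>N. hnorm ip (X m - X n) < e)
         \<longrightarrow> (\<exists>l. \<forall>e>0. \<exists>N. \<forall>n\<ge>N. hnorm ip (X n - l) < e))"

definition hdense :: "('h::ab_group_add \<Rightarrow> 'h \<Rightarrow> complex) \<Rightarrow> 'h set \<Rightarrow> bool" where
  "hdense ip D \<longleftrightarrow> (\<forall>x. \<forall>e>0. \<exists>y\<in>D. hnorm ip (x - y) < e)"

definition bounded_op ::
  "(complex \<Rightarrow> 'h::ab_group_add \<Rightarrow> 'h) \<Rightarrow> ('h \<Rightarrow> 'h \<Rightarrow> complex) \<Rightarrow> ('h \<Rightarrow> 'h) \<Rightarrow> bool" where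
  "bounded_op sc ip C \<longleftrightarrow> Vector_Spaces.linear sc sc C \<and> (\<exists>K. \<forall>x. hnorm ip (C x) \<le> K * hnorm ip x)"

definition hadj :: "('h \<Rightarrow> 'h \<Rightarrow> complex) \<Rightarrow> ('h \<Rightarrow> 'h) \<Rightarrow> 'h \<Rightarrow> 'h" where
  "hadj ip C \<eta> = (THE \<zeta>. \<forall>\<xi>. ip (C \<xi>) \<eta> = ip \<xi> \<zeta>)"

definition dagger :: "('h \<Rightarrow> 'h \<Rightarrow> complex) \<Rightarrow> 'h set \<Rightarrow> ('h \<Rightarrow> 'h) \<Rightarrow> 'h \<Rightarrow> 'h" where
  "dagger ip D X \<eta> = (THE \<zeta>. \<forall>\<xi>\<in>D. ip (X \<xi>) \<eta> = ip \<xi> \<zeta>)"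

definition weak_commutant ::
  "(complex \<Rightarrow> 'h::ab_group_add \<Rightarrow> 'h) \<Rightarrow> ('h \<Rightarrow> 'h \<Rightarrow> complex) \<Rightarrow> 'h set \<Rightarrow> ('h \<Rightarrow> 'h) set
     \<Rightarrow> ('h \<Rightarrow> 'h) set" where
  "weak_commutant sc ip D M =
     {C. bounded_op sc ip C \<and>
         (\<forall>X\<in>M. \<forall>\<xi>\<in>D. \<forall>\<eta>\<in>D. ip (X \<xi>) (hadj ip C \<eta>) = ip (C \<xi>) (dagger ip D X \<eta>))}"

definition seminorm_on :: "(complex \<Rightarrow> 'a::ab_group_add \<Rightarrow> 'a) \<Rightarrow> 'a set \<Rightarrow> ('a \<Rightarrow> real) \<Rightarrow> bool" where
  "seminorm_on sc S p \<longleftrightarrow>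
     (\<forall>x\<in>S. \<forall>y\<in>S. p (x + y) \<le> p x + p y) \<and> (\<forall>c. \<forall>x\<in>S. p (sc c x) = cmod c * p x)"

definition cont_seminorm_on :: "('a \<Rightarrow> real) set \<Rightarrow> 'a set \<Rightarrow> ('a \<Rightarrow> real) \<Rightarrow> bool" where
  "cont_seminorm_on P S p \<longleftrightarrow>
     (\<exists>F c. finite F \<and> F \<subseteq> P \<and> (\<forall>x\<in>S. p x \<le> c * (\<Sum>q\<in>F. q x)))"

definition cont_map :: "('a \<Rightarrow> real) set \<Rightarrow> ('a \<Rightarrow> 'a) \<Rightarrow> bool" where
  "cont_map P f \<longleftrightarrow> (\<forall>p\<in>P. cont_seminorm_on P UNIV (\<lambda>x. p (f x)))"

definition complete_lc :: "('a::ab_group_add \<Rightarrow> real) set \<Rightarrow> bool" where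
  "complete_lc P \<longleftrightarrow>
     (\<forall>F::'a filter. F \<noteq> bot \<longrightarrow>
        (\<forall>p\<in>P. \<forall>e>0. eventually (\<lambda>(x, y). p (x - y) < e) (F \<times>\<^sub>F F)) \<longrightarrow>
        (\<exists>l. \<forall>p\<in>P. \<forall>e>0. eventually (\<lambda>x. p (x - l) < e) F))"

text \<open>The ambient type 'a is the completion A; A0 is the dense *-subalgebra;
  mul a b is the (partial) product, meaningful when a or b lies in A0.\<close>

definition lc_quasi_star_algebra_unit ::
  "(complex \<Rightarrow> 'a::ab_group_add \<Rightarrow> 'a) \<Rightarrow> 'a set \<Rightarrow> ('a \<Rightarrow> 'a) \<Rightarrow> ('a \<Rightarrow> 'a \<Rightarrow> 'a)
     \<Rightarrow> 'a \<Rightarrow> ('a \<Rightarrow> real) set \<Rightarrow> bool" where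
  "lc_quasi_star_algebra_unit sc A0 star mul e P \<longleftrightarrow>
     vector_space sc \<and> module.subspace sc A0 \<and>
     (\<forall>x\<in>A0. \<forall>y\<in>A0. mul x y \<in> A0) \<and> (\<forall>x\<in>A0. star x \<in> A0) \<and>
     \<comment> \<open>bilinearity of the products a x, x a  (a \<in> A, x \<in> A0)\<close>
     (\<forall>x\<in>A0. \<forall>a b. mul (a + b) x = mul a x + mul b x \<and> mul x (a + b) = mul x a + mul x b) \<and>
     (\<forall>x\<in>A0. \<forall>y\<in>A0. \<forall>a. mul a (x + y) = mul a x + mul a y \<and> mul (x + y) a = mul x a + mul y a) \<and>
     (\<forall>x\<in>A0. \<forall>a c. mul (sc c a) x = sc c (mul a x) \<and> mul a (sc c x) = sc c (mul a x) \<and>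
        mul (sc c x) a = sc c (mul x a) \<and> mul x (sc c a) = sc c (mul x a)) \<and>
     \<comment> \<open>associativity laws\<close>
     (\<forall>x1\<in>A0. \<forall>x2\<in>A0. \<forall>a.
        mul (mul x1 a) x2 = mul x1 (mul a x2) \<and>
        mul x1 (mul x2 a) = mul (mul x1 x2) a \<and>
        mul (mul a x1) x2 = mul a (mul x1 x2)) \<and>
     \<comment> \<open>involution\<close>
     (\<forall>a. star (star a) = a) \<and> (\<forall>a b. star (a + b) = star a + star b) \<and>
     (\<forall>c a. star (sc c a) = sc (cnj c) (star a)) \<and>
     (\<forall>x\<in>A0. \<forall>a. star (mul a x) = mul (star x) (star a) \<and> star (mul x a) = mul (star a) (star x)) \<and>
     \<comment> \<open>identity\<close>
     e \<in> A0 \<and> (\<forall>a. mul e a = a \<and> mul a e = a) \<and>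
     \<comment> \<open>locally convex topology \<tau> given by the family P of seminorms\<close>
     (\<forall>p\<in>P. seminorm_on sc UNIV p) \<and>
     (\<forall>a. (\<forall>p\<in>P. p a = 0) \<longrightarrow> a = 0) \<and>
     cont_map P star \<and> (\<forall>x\<in>A0. cont_map P (\<lambda>a. mul a x) \<and> cont_map P (\<lambda>a. mul x a)) \<and>
     \<comment> \<open>A is the \<tau>-completion of A0: A complete and A0 dense\<close>
     complete_lc P \<and>
     (\<forall>a. \<forall>F. finite F \<longrightarrow> F \<subseteq> P \<longrightarrow> (\<forall>eps>0. \<exists>x\<in>A0. (\<Sum>q\<in>F. q (a - x)) < eps))"

end

theory Submission
  imports Defs
begin

text \<open>The inclusion \<open>\<pi>(A)'\<^sub>w \<subseteq> \<pi>(A0)'\<^sub>w\<close> is trivial. Conversely, for \<open>C \<in> \<pi>(A0)'\<^sub>w\<close> the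
  commutation identity \<open>\<langle>\<lambda>(x a), C\<^sup>* \<lambda> b\<rangle> = \<langle>C \<lambda> a, \<lambda>(x\<^sup>* b)\<rangle>\<close> holds for \<open>x \<in> A0\<close>, and both
  sides are additive and \<open>\<tau>\<close>-continuous in \<open>x\<close> once \<open>\<lambda>\<close> is known to be \<open>\<tau>\<close>-continuous; density of
  \<open>A0\<close> then gives it for all \<open>x \<in> A\<close>, and the same argument shows \<open>\<pi>(x)\<^sup>\<dagger> \<lambda> b = \<lambda>(x\<^sup>* b)\<close>.
  Continuity of \<open>\<lambda>\<close> is where the domination \<open>\<omega>(a\<^sup>* a) \<le> p(a)\<^sup>2\<close> enters: it gives
  \<open>\<parallel>\<lambda> a\<parallel> \<le> p(a)\<close> on \<open>A0\<close>, and for general \<open>y\<close> the norm \<open>\<parallel>\<lambda> y\<parallel>\<close> is recovered from the inner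
  products \<open>\<langle>\<lambda> y, \<lambda> c\<rangle> = \<omega>(c\<^sup>* y)\<close>, \<open>c \<in> A0\<close>, which are \<open>\<tau>\<close>-continuous in \<open>y\<close>.\<close>

lemma additive_linear: "Vector_Spaces.linear s1 s2 f \<Longrightarrow> Modules.additive f"
  by (simp add: Modules.additive.intro Vector_Spaces.linear_iff)

context
  fixes sH :: "complex \<Rightarrow> 'h::ab_group_add \<Rightarrow> 'h" and ip :: "'h \<Rightarrow> 'h \<Rightarrow> complex"
  assumes H: "hilbert_space sH ip"
begin

lemma ip_add_left: "ip (x + y) z = ip x z + ip y z"
  using H unfolding hilbert_space_def by (elim conjE allE) assumption

lemma ip_scale_left: "ip (sH c x) y = c * ip x y"
  using H unfolding hilbert_space_def by (elim conjE allE) assumption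

lemma ip_cnj: "ip y x = cnj (ip x y)"
  using H unfolding hilbert_space_def by (elim conjE allE) assumption

lemma ip_self_real: "Im (ip x x) = 0"
  using H unfolding hilbert_space_def by (elim conjE allE) assumption

lemma ip_self_nonneg: "0 \<le> Re (ip x x)"
  using H unfolding hilbert_space_def by (elim conjE allE) assumption

lemma ip_self_eq_0: "ip x x = 0 \<Longrightarrow> x = 0"
  using H unfolding hilbert_space_def by (elim conjE allE) (erule mp)

lemma additive_ip_left: "Modules.additive (\<lambda>x. ip x z)"
  by (simp add: Modules.additive.intro ip_add_left)

lemma additive_ip_right: "Modules.additive (\<lambda>x. ip z x)"
proof
  fix x y
  show "ip z (x + y) = ip z x + ip z y"
    using ip_cnj[of z "x + y"] ip_cnj[of z x] ip_cnj[of z y] by (simp add: ip_add_left)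
qed

lemmas ip_diff_left = Modules.additive.diff[OF additive_ip_left]
  and ip_diff_right = Modules.additive.diff[OF additive_ip_right]

lemma ip_scale_right: "ip x (sH c y) = cnj c * ip x y"
  by (metis ip_cnj ip_scale_left complex_cnj_mult complex_cnj_cnj)

lemma ip_self_of_real: "ip x x = complex_of_real (Re (ip x x))"
  using ip_self_real[of x] by (simp add: complex_eq_iff)

lemma hnorm_nonneg: "0 \<le> hnorm ip x"
  unfolding hnorm_def using ip_self_nonneg by simp

lemma hnorm_square: "(hnorm ip x)\<^sup>2 = Re (ip x x)"
  unfolding hnorm_def using ip_self_nonneg by simp

lemma hnorm_minus_commute: "hnorm ip (x - y) = hnorm ip (y - x)"
proof -
  have "ip (- z) (- z) = ip z z" for z
    by (simp add: Modules.additive.minus[OF additive_ip_left] Modules.additive.minus[OF additive_ip_right])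
  from this[of "y - x"] show ?thesis
    by (simp add: hnorm_def)
qed

lemma hnorm_eq_0: "hnorm ip x = 0 \<Longrightarrow> x = 0"
  using hnorm_square[of x] ip_self_of_real[of x] by (simp add: ip_self_eq_0)

lemma cauchy_schwarz: "cmod (ip x y) \<le> hnorm ip x * hnorm ip y"
proof (cases "y = 0")
  case True
  then show ?thesis by (simp add: Modules.additive.zero[OF additive_ip_right] hnorm_nonneg)
next
  case False
  define B where "B = Re (ip y y)"
  define C where "C = ip x y"
  have "B \<noteq> 0"
    using False unfolding B_def by (metis ip_self_eq_0 ip_self_of_real of_real_0)
  with ip_self_nonneg[of y] have B: "0 < B" unfolding B_def by linarith
  have yy: "ip y y = complex_of_real B" using ip_self_of_real B_def by metis
  have cc: "complex_of_real (cmod C) * complex_of_real (cmod C) = C * cnj C"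
    using complex_norm_square[of C] by (simp add: power2_eq_square)
  \<comment> \<open>expand \<open>0 \<le> \<langle>x - t y, x - t y\<rangle>\<close> with the optimal \<open>t = \<langle>x, y\<rangle> / \<langle>y, y\<rangle>\<close>\<close>
  define t where "t = C / complex_of_real B"
  have "ip (x - sH t y) (x - sH t y) = ip x x - cnj t * C - t * cnj C + t * cnj t * ip y y"
    using ip_cnj[of y x] unfolding C_def
    by (simp add: ip_diff_left ip_diff_right ip_scale_left ip_scale_right algebra_simps)
  also have "\<dots> = ip x x - complex_of_real ((cmod C)\<^sup>2 / B)"
    unfolding t_def yy using B cc by (simp add: field_simps power2_eq_square)
  finally have "(cmod C)\<^sup>2 / B \<le> Re (ip x x)"
    using ip_self_nonneg[of "x - sH t y"] by simp
  then have "(cmod C)\<^sup>2 \<le> (hnorm ip x * hnorm ip y)\<^sup>2"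
    using B unfolding B_def power_mult_distrib hnorm_square by (simp add: field_simps)
  then show ?thesis
    unfolding C_def using hnorm_nonneg power2_le_imp_le by (metis mult_nonneg_nonneg)
qed

lemma hnorm_triangle: "hnorm ip (x + y) \<le> hnorm ip x + hnorm ip y"
proof -
  have "Re (ip (x + y) (x + y)) = Re (ip x x) + Re (ip y y) + 2 * Re (ip x y)"
    using ip_cnj[of y x]
    by (simp add: Modules.additive.add[OF additive_ip_left] Modules.additive.add[OF additive_ip_right])
  also have "Re (ip x y) \<le> hnorm ip x * hnorm ip y"
    using cauchy_schwarz[of x y] complex_Re_le_cmod order_trans by blast
  finally have "(hnorm ip (x + y))\<^sup>2 \<le> (hnorm ip x)\<^sup>2 + (hnorm ip y)\<^sup>2 + 2 * (hnorm ip x * hnorm ip y)"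
    by (simp only: hnorm_square)
  then have "(hnorm ip (x + y))\<^sup>2 \<le> (hnorm ip x + hnorm ip y)\<^sup>2"
    by (simp add: power2_sum)
  then show ?thesis using hnorm_nonneg by (meson add_nonneg_nonneg power2_le_imp_le)
qed

lemma hnorm_le_of_dense:
  assumes D: "hdense ip D" and "0 \<le> B" and bound: "\<forall>d\<in>D. cmod (ip v d) \<le> B * hnorm ip d"
  shows "hnorm ip v \<le> B"
proof -
  define N where "N = hnorm ip v"
  have "N\<^sup>2 \<le> N * B + e" if "0 < e" for e
  proof -
    define \<delta> where "\<delta> = e / (N + B + 1)"
    have "0 < \<delta>" and \<delta>: "\<delta> * (N + B) \<le> e"
      using \<open>0 < e\<close> \<open>0 \<le> B\<close> hnorm_nonneg[of v]
      by (auto simp: \<delta>_def N_def field_simps)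
    then obtain d where "d \<in> D" and close: "hnorm ip (v - d) < \<delta>"
      using D unfolding hdense_def by blast
    have "hnorm ip d \<le> N + \<delta>"
      using hnorm_triangle[of v "d - v"] close hnorm_minus_commute[of d v]
      unfolding N_def by simp
    have "N\<^sup>2 = Re (ip v d) + Re (ip v (v - d))"
      by (simp add: N_def hnorm_square ip_diff_right)
    also have "\<dots> \<le> B * hnorm ip d + N * \<delta>"
    proof (rule add_mono)
      show "Re (ip v d) \<le> B * hnorm ip d"
        using bound \<open>d \<in> D\<close> complex_Re_le_cmod order_trans by blast
      show "Re (ip v (v - d)) \<le> N * \<delta>"
        using cauchy_schwarz[of v "v - d"] close hnorm_nonneg[of v] complex_Re_le_cmod[of "ip v (v - d)"]
        unfolding N_def by (smt (verit) mult_left_mono)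
    qed
    also have "\<dots> \<le> B * (N + \<delta>) + N * \<delta>"
      using \<open>hnorm ip d \<le> N + \<delta>\<close> \<open>0 \<le> B\<close> by (simp add: mult_left_mono)
    finally show ?thesis using \<delta> by (simp add: algebra_simps)
  qed
  then have "N\<^sup>2 \<le> N * B" by (rule field_le_epsilon)
  then show ?thesis
    using \<open>0 \<le> B\<close> hnorm_nonneg[of v] unfolding N_def
    by (smt (verit) mult_le_cancel_left power2_eq_square)
qed

lemma eq_of_dense_ip:
  assumes "hdense ip D" and "\<forall>d\<in>D. ip d z1 = ip d z2"
  shows "z1 = z2"
proof -
  have "ip (z1 - z2) d = 0" if "d \<in> D" for d
    using assms(2) that ip_cnj[of z1 d] ip_cnj[of z2 d] by (simp add: ip_diff_left)
  then have "\<forall>d\<in>D. cmod (ip (z1 - z2) d) \<le> 0 * hnorm ip d"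
    by simp
  then have "hnorm ip (z1 - z2) \<le> 0"
    using hnorm_le_of_dense[OF assms(1), of 0] by simp
  then show ?thesis using hnorm_eq_0 hnorm_nonneg by (metis antisym eq_iff_diff_eq_0)
qed

end

lemma seminorm_on_minus:
  assumes "module sc" "seminorm_on sc S p" "x \<in> S"
  shows "p (- x) = p x"
proof -
  have "p (sc (-1) x) = cmod (-1) * p x"
    using assms(2,3) unfolding seminorm_on_def by blast
  then show ?thesis
    using module.scale_minus_left[OF assms(1), of 1 x] module.scale_one[OF assms(1)] by simp
qed

lemma seminorm_on_nonneg:
  assumes "module sc" "module.subspace sc S" "seminorm_on sc S p" "x \<in> S"
  shows "0 \<le> p x"
proof -
  have "p (sc 0 x) = cmod 0 * p x"
    using assms(3,4) unfolding seminorm_on_def by blast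
  then have "p 0 = 0"
    using module.scale_zero_left[OF assms(1)] by simp
  moreover have "p (x + - x) \<le> p x + p (- x)"
    using assms(3,4) module.subspace_neg[OF assms(1,2,4)] unfolding seminorm_on_def by blast
  ultimately show ?thesis
    using seminorm_on_minus[OF assms(1,3,4)] by simp
qed

definition seminorm_dense :: "('a::ab_group_add \<Rightarrow> real) set \<Rightarrow> 'a set \<Rightarrow> bool" where
  "seminorm_dense P S \<longleftrightarrow> (\<forall>a F. finite F \<longrightarrow> F \<subseteq> P \<longrightarrow> (\<forall>eps>0. \<exists>x\<in>S. (\<Sum>q\<in>F. q (a - x)) < eps))"

context
  fixes P :: "('a::ab_group_add \<Rightarrow> real) set"
  assumes P_nonneg: "\<forall>q\<in>P. \<forall>x. 0 \<le> q x"
begin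

lemma sum_seminorms_nonneg: "F \<subseteq> P \<Longrightarrow> 0 \<le> (\<Sum>q\<in>F. q x)"
  using P_nonneg by (meson subsetD sum_nonneg)

lemma cont_seminorm_onE:
  assumes "cont_seminorm_on P S \<phi>"
  obtains F K where "finite F" "F \<subseteq> P" "0 \<le> K" "\<forall>x\<in>S. \<phi> x \<le> K * (\<Sum>q\<in>F. q x)"
proof -
  obtain F c where F: "finite F" "F \<subseteq> P" "\<forall>x\<in>S. \<phi> x \<le> c * (\<Sum>q\<in>F. q x)"
    using assms unfolding cont_seminorm_on_def by blast
  have "\<phi> x \<le> max c 0 * (\<Sum>q\<in>F. q x)" if "x \<in> S" for x
  proof -
    have "c * (\<Sum>q\<in>F. q x) \<le> max c 0 * (\<Sum>q\<in>F. q x)"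
      using sum_seminorms_nonneg[OF F(2)] by (simp add: mult_right_mono)
    then show ?thesis using F(3) that by fastforce
  qed
  with F(1,2) show ?thesis by (intro that[of F "max c 0"]) auto
qed

lemma cont_seminorm_on_dominated:
  assumes "cont_seminorm_on P S \<phi>" "0 \<le> c" "\<forall>x\<in>S. \<psi> x \<le> c * \<phi> x"
  shows "cont_seminorm_on P S \<psi>"
proof -
  obtain F K where F: "finite F" "F \<subseteq> P" "0 \<le> K" "\<forall>x\<in>S. \<phi> x \<le> K * (\<Sum>q\<in>F. q x)"
    using assms(1) by (rule cont_seminorm_onE)
  have "\<psi> x \<le> (c * K) * (\<Sum>q\<in>F. q x)" if "x \<in> S" for x
  proof -
    have "c * \<phi> x \<le> c * (K * (\<Sum>q\<in>F. q x))"
      using F(4) that assms(2) by (simp add: mult_left_mono)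
    then show ?thesis using assms(3) that by (metis mult.assoc order_trans)
  qed
  with F(1,2) show ?thesis unfolding cont_seminorm_on_def by blast
qed

lemma cont_seminorm_on_add:
  assumes "cont_seminorm_on P S \<phi>" "cont_seminorm_on P S \<psi>"
  shows "cont_seminorm_on P S (\<lambda>x. \<phi> x + \<psi> x)"
proof -
  obtain F K where F: "finite F" "F \<subseteq> P" "0 \<le> K" "\<forall>x\<in>S. \<phi> x \<le> K * (\<Sum>q\<in>F. q x)"
    using assms(1) by (rule cont_seminorm_onE)
  obtain G L where G: "finite G" "G \<subseteq> P" "0 \<le> L" "\<forall>x\<in>S. \<psi> x \<le> L * (\<Sum>q\<in>G. q x)"
    using assms(2) by (rule cont_seminorm_onE)
  have "\<phi> x + \<psi> x \<le> (K + L) * (\<Sum>q\<in>F \<union> G. q x)" if "x \<in> S" for x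
  proof -
    have "(\<Sum>q\<in>F. q x) \<le> (\<Sum>q\<in>F \<union> G. q x)" "(\<Sum>q\<in>G. q x) \<le> (\<Sum>q\<in>F \<union> G. q x)"
      using F(1,2) G(1,2) P_nonneg by (auto intro!: sum_mono2)
    then have "K * (\<Sum>q\<in>F. q x) + L * (\<Sum>q\<in>G. q x) \<le> (K + L) * (\<Sum>q\<in>F \<union> G. q x)"
      using F(3) G(3) by (simp add: distrib_right add_mono mult_left_mono)
    then show ?thesis
      using F(4) G(4) that by fastforce
  qed
  with F(1,2) G(1,2) show ?thesis unfolding cont_seminorm_on_def
    by (intro exI[of _ "F \<union> G"] exI[of _ "K + L"]) simp
qed

lemma cont_seminorm_on_sum:
  assumes "finite I" "\<forall>i\<in>I. cont_seminorm_on P S (\<phi> i)"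
  shows "cont_seminorm_on P S (\<lambda>x. \<Sum>i\<in>I. \<phi> i x)"
  using assms
proof (induction I rule: finite_induct)
  case empty
  show ?case unfolding cont_seminorm_on_def by (rule exI[of _ "{}"]) simp
next
  case (insert i I)
  then show ?case by (simp add: cont_seminorm_on_add)
qed

lemma cont_seminorm_on_comp:
  assumes "cont_seminorm_on P UNIV r" "cont_map P h"
  shows "cont_seminorm_on P UNIV (\<lambda>x. r (h x))"
proof -
  obtain G K where G: "finite G" "G \<subseteq> P" "0 \<le> K" "\<forall>x. r x \<le> K * (\<Sum>q\<in>G. q x)"
    using assms(1) by (rule cont_seminorm_onE) simp
  have "cont_seminorm_on P UNIV (\<lambda>x. \<Sum>q\<in>G. q (h x))"
    using G(1,2) assms(2) unfolding cont_map_def by (intro cont_seminorm_on_sum) auto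
  then show ?thesis
    by (rule cont_seminorm_on_dominated[OF _ G(3)]) (simp add: G(4))
qed

lemma seminorm_dense_approx:
  assumes "seminorm_dense P S" "cont_seminorm_on P UNIV \<phi>" "0 < \<epsilon>"
  obtains x' where "x' \<in> S" "\<phi> (x - x') < \<epsilon>"
proof -
  obtain F K where F: "finite F" "F \<subseteq> P" "0 \<le> K" "\<forall>x. \<phi> x \<le> K * (\<Sum>q\<in>F. q x)"
    using assms(2) by (rule cont_seminorm_onE) simp
  have "0 < \<epsilon> / (K + 1)"
    using assms(3) F(3) by simp
  then obtain x' where "x' \<in> S" and x': "(\<Sum>q\<in>F. q (x - x')) < \<epsilon> / (K + 1)"
    using assms(1) F(1,2) unfolding seminorm_dense_def by blast
  have "K * (\<Sum>q\<in>F. q (x - x')) \<le> K * (\<epsilon> / (K + 1))"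
    using mult_left_mono[OF less_imp_le[OF x'] F(3)] .
  also have "\<dots> < \<epsilon>"
    using F(3) assms(3) by (simp add: field_simps)
  finally show ?thesis
    using that \<open>x' \<in> S\<close> F(4) le_less_trans by blast
qed

lemma additive_eq_0_on_dense:
  fixes f :: "'a \<Rightarrow> 'b::real_normed_vector"
  assumes "seminorm_dense P S" "Modules.additive f" "cont_seminorm_on P UNIV (\<lambda>x. norm (f x))"
    and "\<forall>x\<in>S. f x = 0"
  shows "f x = 0"
proof -
  have "norm (f x) \<le> 0 + \<epsilon>" if \<epsilon>: "0 < \<epsilon>" for \<epsilon>
  proof -
    obtain x' where "x' \<in> S" "norm (f (x - x')) < \<epsilon>"
      using seminorm_dense_approx[OF assms(1,3) \<epsilon>] .
    then show ?thesis
      using assms(4) Modules.additive.diff[OF assms(2)] by simp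
  qed
  then have "norm (f x) \<le> 0"
    by (rule field_le_epsilon)
  then show ?thesis by simp
qed

end

locale gns_construction =
  fixes sA :: "complex \<Rightarrow> 'a::ab_group_add \<Rightarrow> 'a" and A0 :: "'a set" and star :: "'a \<Rightarrow> 'a"
    and mul :: "'a \<Rightarrow> 'a \<Rightarrow> 'a" and e :: 'a and P :: "('a \<Rightarrow> real) set" and p :: "'a \<Rightarrow> real"
    and \<omega> :: "'a \<Rightarrow> complex"
    and sH :: "complex \<Rightarrow> 'h::ab_group_add \<Rightarrow> 'h" and ip :: "'h \<Rightarrow> 'h \<Rightarrow> complex"
    and lam :: "'a \<Rightarrow> 'h" and pi :: "'a \<Rightarrow> 'h \<Rightarrow> 'h"
  assumes qa: "lc_quasi_star_algebra_unit sA A0 star mul e P"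
    and p_seminorm: "seminorm_on sA A0 p" and p_cont: "cont_seminorm_on P A0 p"
    and p_bound: "\<forall>a\<in>A0. Re (\<omega> (mul (star a) a)) \<le> (p a)\<^sup>2"
    and w_lin: "Vector_Spaces.linear sA (*) \<omega>"
    and w_cont: "cont_seminorm_on P UNIV (\<lambda>x. cmod (\<omega> x))"
    and H: "hilbert_space sH ip"
    and lam_lin: "Vector_Spaces.linear sA sH lam"
    and lam_dense: "hdense ip (lam ` A0)"
    and lam_ip: "\<forall>x. \<forall>a\<in>A0. ip (lam x) (lam a) = \<omega> (mul (star a) x)"
    and pi_def: "\<forall>x. \<forall>a\<in>A0. pi x (lam a) = lam (mul x a)"
begin

lemma module_sA: "module sA"
  using qa by (simp add: lc_quasi_star_algebra_unit_def module_iff_vector_space)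

lemma A0_subspace: "module.subspace sA A0"
  using qa by (simp add: lc_quasi_star_algebra_unit_def)

lemma mul_closed: "x \<in> A0 \<Longrightarrow> y \<in> A0 \<Longrightarrow> mul x y \<in> A0"
  using qa by (simp add: lc_quasi_star_algebra_unit_def)

lemma star_closed: "x \<in> A0 \<Longrightarrow> star x \<in> A0"
  using qa by (simp add: lc_quasi_star_algebra_unit_def)

lemma additive_mul_left: "x \<in> A0 \<Longrightarrow> Modules.additive (\<lambda>a. mul a x)"
  using qa by (simp add: lc_quasi_star_algebra_unit_def Modules.additive.intro)

lemma additive_mul_right: "x \<in> A0 \<Longrightarrow> Modules.additive (mul x)"
  using qa by (simp add: lc_quasi_star_algebra_unit_def Modules.additive.intro)

lemma additive_star: "Modules.additive star"
  using qa by (simp add: lc_quasi_star_algebra_unit_def Modules.additive.intro)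

lemma mul_assoc: "x \<in> A0 \<Longrightarrow> y \<in> A0 \<Longrightarrow> mul (mul a x) y = mul a (mul x y)"
  using qa by (simp add: lc_quasi_star_algebra_unit_def)

lemma star_star: "star (star a) = a"
  using qa by (simp add: lc_quasi_star_algebra_unit_def)

lemma star_mul: "x \<in> A0 \<Longrightarrow> star (mul x a) = mul (star a) (star x)"
  using qa by (simp add: lc_quasi_star_algebra_unit_def)

lemma P_seminorm: "q \<in> P \<Longrightarrow> seminorm_on sA UNIV q"
  using qa by (simp add: lc_quasi_star_algebra_unit_def)

lemma P_nonneg: "\<forall>q\<in>P. \<forall>x. 0 \<le> q x"
  using seminorm_on_nonneg[OF module_sA module.subspace_UNIV[OF module_sA] P_seminorm] by blast

lemma cont_map_star: "cont_map P star"
  using qa by (simp add: lc_quasi_star_algebra_unit_def)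

lemma cont_map_mul_left: "x \<in> A0 \<Longrightarrow> cont_map P (\<lambda>a. mul a x)"
  using qa by (simp add: lc_quasi_star_algebra_unit_def)

lemma cont_map_mul_right: "x \<in> A0 \<Longrightarrow> cont_map P (mul x)"
  using qa by (simp add: lc_quasi_star_algebra_unit_def)

lemma A0_dense: "seminorm_dense P A0"
  using qa by (simp add: lc_quasi_star_algebra_unit_def seminorm_dense_def)

lemma additive_\<omega>: "Modules.additive \<omega>"
  by (rule additive_linear[OF w_lin])

lemma additive_lam: "Modules.additive lam"
  by (rule additive_linear[OF lam_lin])

lemma sum_seminorms_le_add_diff:
  assumes "F \<subseteq> P"
  shows "(\<Sum>q\<in>F. q y') \<le> (\<Sum>q\<in>F. q y) + (\<Sum>q\<in>F. q (y - y'))"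
proof -
  have "q y' \<le> q y + q (y - y')" if "q \<in> F" for q
  proof -
    have q: "seminorm_on sA UNIV q"
      using assms that P_seminorm by blast
    then have "q (y + - (y - y')) \<le> q y + q (- (y - y'))"
      unfolding seminorm_on_def by blast
    then show ?thesis
      using seminorm_on_minus[OF module_sA q, of "y - y'"] by simp
  qed
  then show ?thesis
    by (simp add: sum_mono flip: sum.distrib)
qed

lemma hnorm_lam_le: "a \<in> A0 \<Longrightarrow> hnorm ip (lam a) \<le> p a"
proof -
  assume a: "a \<in> A0"
  have "(hnorm ip (lam a))\<^sup>2 = Re (\<omega> (mul (star a) a))"
    using lam_ip a by (simp add: hnorm_square[OF H])
  also have "\<dots> \<le> (p a)\<^sup>2"
    using p_bound a by blast
  finally show ?thesis
    using seminorm_on_nonneg[OF module_sA A0_subspace p_seminorm a] by (rule power2_le_imp_le)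
qed

text \<open>For \<open>y \<in> A0\<close> this is Cauchy-Schwarz together with \<open>\<parallel>\<lambda> y\<parallel> \<le> p(y)\<close>; it extends to all \<open>y\<close> by
  \<open>\<tau>\<close>-continuity of both sides in \<open>y\<close>, before continuity of \<open>\<lambda>\<close> itself is available.\<close>
lemma omega_bound:
  assumes F: "finite F" "F \<subseteq> P" "0 \<le> K" "\<forall>a\<in>A0. p a \<le> K * (\<Sum>q\<in>F. q a)" and c: "c \<in> A0"
  shows "cmod (\<omega> (mul (star c) y)) \<le> hnorm ip (lam c) * K * (\<Sum>q\<in>F. q y)"
proof -
  define M where "M = hnorm ip (lam c) * K"
  have "0 \<le> M"
    unfolding M_def using F(3) hnorm_nonneg[OF H] by simp
  have on_A0: "cmod (\<omega> (mul (star c) y')) \<le> M * (\<Sum>q\<in>F. q y')" if "y' \<in> A0" for y'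
  proof -
    have "cmod (\<omega> (mul (star c) y')) \<le> hnorm ip (lam y') * hnorm ip (lam c)"
      using cauchy_schwarz[OF H, of "lam y'" "lam c"] lam_ip c by simp
    also have "\<dots> \<le> K * (\<Sum>q\<in>F. q y') * hnorm ip (lam c)"
      using hnorm_lam_le[OF that] F(4) that hnorm_nonneg[OF H]
      by (meson mult_right_mono order_trans)
    finally show ?thesis
      by (simp add: M_def mult.commute mult.left_commute)
  qed
  define \<phi> where "\<phi> z = cmod (\<omega> (mul (star c) z)) + M * (\<Sum>q\<in>F. q z)" for z
  have "cont_seminorm_on P UNIV \<phi>"
    unfolding \<phi>_def
  proof (rule cont_seminorm_on_add[OF P_nonneg])
    show "cont_seminorm_on P UNIV (\<lambda>z. cmod (\<omega> (mul (star c) z)))"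
      by (rule cont_seminorm_on_comp[OF P_nonneg w_cont cont_map_mul_right[OF star_closed[OF c]]])
    show "cont_seminorm_on P UNIV (\<lambda>z. M * (\<Sum>q\<in>F. q z))"
      unfolding cont_seminorm_on_def using F(1,2) by blast
  qed
  have "cmod (\<omega> (mul (star c) y)) \<le> M * (\<Sum>q\<in>F. q y) + \<epsilon>" if \<epsilon>: "0 < \<epsilon>" for \<epsilon>
  proof -
    obtain y' where "y' \<in> A0" and close: "\<phi> (y - y') < \<epsilon>"
      using seminorm_dense_approx[OF P_nonneg A0_dense \<open>cont_seminorm_on P UNIV \<phi>\<close> \<epsilon>] .
    have split: "\<omega> (mul (star c) y) = \<omega> (mul (star c) y') + \<omega> (mul (star c) (y - y'))"
      using Modules.additive.diff[OF additive_mul_right[OF star_closed[OF c]]]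
        Modules.additive.diff[OF additive_\<omega>] by simp
    have "M * (\<Sum>q\<in>F. q y') \<le> M * (\<Sum>q\<in>F. q y) + M * (\<Sum>q\<in>F. q (y - y'))"
      using mult_left_mono[OF sum_seminorms_le_add_diff[OF F(2)] \<open>0 \<le> M\<close>]
      by (simp add: distrib_left)
    moreover have "cmod (\<omega> (mul (star c) y)) \<le> cmod (\<omega> (mul (star c) y')) + cmod (\<omega> (mul (star c) (y - y')))"
      unfolding split by (rule norm_triangle_ineq)
    ultimately show ?thesis
      using on_A0[OF \<open>y' \<in> A0\<close>] close unfolding \<phi>_def by linarith
  qed
  then show ?thesis
    unfolding M_def by (rule field_le_epsilon)
qed

lemma hnorm_lam_bound:
  assumes "finite F" "F \<subseteq> P" "0 \<le> K" "\<forall>a\<in>A0. p a \<le> K * (\<Sum>q\<in>F. q a)"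
  shows "hnorm ip (lam y) \<le> K * (\<Sum>q\<in>F. q y)"
proof (rule hnorm_le_of_dense[OF H lam_dense])
  show "0 \<le> K * (\<Sum>q\<in>F. q y)"
    using assms(3) sum_seminorms_nonneg[OF P_nonneg assms(2)] by simp
  show "\<forall>d\<in>lam ` A0. cmod (ip (lam y) d) \<le> K * (\<Sum>q\<in>F. q y) * hnorm ip d"
    using omega_bound[OF assms] lam_ip by (auto simp: mult.commute mult.left_commute)
qed

lemma cont_seminorm_lam: "cont_seminorm_on P UNIV (\<lambda>y. hnorm ip (lam y))"
proof -
  obtain F K where F: "finite F" "F \<subseteq> P" "0 \<le> K" "\<forall>a\<in>A0. p a \<le> K * (\<Sum>q\<in>F. q a)"
    using p_cont by (rule cont_seminorm_onE[OF P_nonneg])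
  then show ?thesis
    unfolding cont_seminorm_on_def
    by (intro exI[of _ F] exI[of _ K]) (simp add: hnorm_lam_bound[OF F])
qed

lemma adjoint_identity_extends:
  assumes a: "a \<in> A0" and b: "b \<in> A0"
    and on_A0: "\<forall>x\<in>A0. ip (lam (mul x a)) w = ip v (lam (mul (star x) b))"
  shows "ip (lam (mul x a)) w = ip v (lam (mul (star x) b))"
proof -
  define f where "f x = ip (lam (mul x a)) w - ip v (lam (mul (star x) b))" for x
  have "Modules.additive f"
    by (rule Modules.additive.intro)
      (simp add: f_def Modules.additive.add[OF additive_mul_left[OF a]]
        Modules.additive.add[OF additive_mul_left[OF b]] Modules.additive.add[OF additive_star]
        Modules.additive.add[OF additive_lam] Modules.additive.add[OF additive_ip_left[OF H]]
        Modules.additive.add[OF additive_ip_right[OF H]])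
  moreover have "cont_seminorm_on P UNIV (\<lambda>x. cmod (f x))"
  proof (rule cont_seminorm_on_dominated[OF P_nonneg])
    have left: "cont_seminorm_on P UNIV (\<lambda>x. hnorm ip (lam (mul x c)))" if "c \<in> A0" for c
      by (rule cont_seminorm_on_comp[OF P_nonneg cont_seminorm_lam cont_map_mul_left[OF that]])
    show "cont_seminorm_on P UNIV (\<lambda>x. hnorm ip (lam (mul x a)) + hnorm ip (lam (mul (star x) b)))"
      using cont_seminorm_on_add[OF P_nonneg left[OF a]
          cont_seminorm_on_comp[OF P_nonneg left[OF b] cont_map_star]] .
    show "0 \<le> hnorm ip w + hnorm ip v"
      using hnorm_nonneg[OF H] by (simp add: add_nonneg_nonneg)
    show "\<forall>x\<in>UNIV. cmod (f x) \<le> (hnorm ip w + hnorm ip v) *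
        (hnorm ip (lam (mul x a)) + hnorm ip (lam (mul (star x) b)))"
    proof
      fix x
      have "cmod (f x) \<le> hnorm ip (lam (mul x a)) * hnorm ip w + hnorm ip v * hnorm ip (lam (mul (star x) b))"
        unfolding f_def using cauchy_schwarz[OF H] by (meson add_mono norm_triangle_ineq4 order_trans)
      also have "\<dots> \<le> (hnorm ip w + hnorm ip v) * (hnorm ip (lam (mul x a)) + hnorm ip (lam (mul (star x) b)))"
        using hnorm_nonneg[OF H] by (simp add: algebra_simps)
      finally show "cmod (f x) \<le> \<dots>" .
    qed
  qed
  moreover have "\<forall>x\<in>A0. f x = 0"
    using on_A0 by (simp add: f_def)
  ultimately have "f x = 0"
    by (rule additive_eq_0_on_dense[OF P_nonneg A0_dense])
  then show ?thesis
    by (simp add: f_def)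
qed

lemma pi_adjoint_identity:
  assumes "a \<in> A0" "b \<in> A0"
  shows "ip (lam (mul x a)) (lam b) = ip (lam a) (lam (mul (star x) b))"
proof (rule adjoint_identity_extends[OF assms], intro ballI)
  fix x assume "x \<in> A0"
  have "star (mul (star x) b) = mul (star b) x"
    using star_mul[OF star_closed[OF \<open>x \<in> A0\<close>]] star_star by simp
  then show "ip (lam (mul x a)) (lam b) = ip (lam a) (lam (mul (star x) b))"
    using lam_ip assms mul_closed[OF star_closed[OF \<open>x \<in> A0\<close>] \<open>b \<in> A0\<close>]
      mul_assoc[OF \<open>x \<in> A0\<close> \<open>a \<in> A0\<close>, of "star b"] by simp
qed

lemma dagger_pi:
  assumes "b \<in> A0"
  shows "dagger ip (lam ` A0) (pi x) (lam b) = lam (mul (star x) b)"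
  unfolding dagger_def
proof (rule the_equality)
  show adj: "\<forall>\<xi>\<in>lam ` A0. ip (pi x \<xi>) (lam b) = ip \<xi> (lam (mul (star x) b))"
    using pi_adjoint_identity[OF _ assms] pi_def by auto
  fix \<zeta> assume "\<forall>\<xi>\<in>lam ` A0. ip (pi x \<xi>) (lam b) = ip \<xi> \<zeta>"
  with adj show "\<zeta> = lam (mul (star x) b)"
    by (intro eq_of_dense_ip[OF H lam_dense]) simp
qed

lemma weak_commutant_pi_eq:
  "weak_commutant sH ip (lam ` A0) (pi ` UNIV) = weak_commutant sH ip (lam ` A0) (pi ` A0)"
proof
  show "weak_commutant sH ip (lam ` A0) (pi ` UNIV) \<subseteq> weak_commutant sH ip (lam ` A0) (pi ` A0)"
    unfolding weak_commutant_def by blast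
  show "weak_commutant sH ip (lam ` A0) (pi ` A0) \<subseteq> weak_commutant sH ip (lam ` A0) (pi ` UNIV)"
  proof
    fix C assume "C \<in> weak_commutant sH ip (lam ` A0) (pi ` A0)"
    then have "bounded_op sH ip C"
      and comm: "\<And>x a b. x \<in> A0 \<Longrightarrow> a \<in> A0 \<Longrightarrow> b \<in> A0 \<Longrightarrow>
          ip (lam (mul x a)) (hadj ip C (lam b)) = ip (C (lam a)) (lam (mul (star x) b))"
      unfolding weak_commutant_def using pi_def dagger_pi by auto
    have "ip (lam (mul x a)) (hadj ip C (lam b)) = ip (C (lam a)) (lam (mul (star x) b))"
      if "a \<in> A0" "b \<in> A0" for x a b
      using adjoint_identity_extends[OF that] comm that by blast
    with \<open>bounded_op sH ip C\<close> show "C \<in> weak_commutant sH ip (lam ` A0) (pi ` UNIV)"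
      unfolding weak_commutant_def using pi_def dagger_pi by auto
  qed
qed

end

theorem proposition10:
  fixes sA :: "complex \<Rightarrow> 'a::ab_group_add \<Rightarrow> 'a"
    and A0 :: "'a set" and star :: "'a \<Rightarrow> 'a" and mul :: "'a \<Rightarrow> 'a \<Rightarrow> 'a" and e :: 'a
    and P :: "('a \<Rightarrow> real) set"
    and \<omega>0 \<omega> :: "'a \<Rightarrow> complex"
    and sH :: "complex \<Rightarrow> 'h::ab_group_add \<Rightarrow> 'h" and ip :: "'h \<Rightarrow> 'h \<Rightarrow> complex"
    and lam :: "'a \<Rightarrow> 'h" and pi :: "'a \<Rightarrow> 'h \<Rightarrow> 'h"
  assumes qa: "lc_quasi_star_algebra_unit sA A0 star mul e P"
    and w0_add: "\<forall>x\<in>A0. \<forall>y\<in>A0. \<omega>0 (x + y) = \<omega>0 x + \<omega>0 y"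
    and w0_scale: "\<forall>c. \<forall>x\<in>A0. \<omega>0 (sA c x) = c * \<omega>0 x"
    and w0_pos: "\<forall>a\<in>A0. Im (\<omega>0 (mul (star a) a)) = 0 \<and> Re (\<omega>0 (mul (star a) a)) \<ge> 0"
    and w0_bound: "\<exists>p. seminorm_on sA A0 p \<and> cont_seminorm_on P A0 p \<and>
                      (\<forall>a\<in>A0. Re (\<omega>0 (mul (star a) a)) \<le> (p a)\<^sup>2)"
    and w_lin: "Vector_Spaces.linear sA (*) \<omega>"
    and w_cont: "cont_seminorm_on P UNIV (\<lambda>x. cmod (\<omega> x))"
    and w_ext: "\<forall>a\<in>A0. \<omega> a = \<omega>0 a"
    and H: "hilbert_space sH ip"
    and lam_lin: "Vector_Spaces.linear sA sH lam"
    and lam_dense: "hdense ip (lam ` A0)"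
    and lam_ip: "\<forall>x. \<forall>a\<in>A0. ip (lam x) (lam a) = \<omega> (mul (star a) x)"
    and pi_def: "\<forall>x. \<forall>a\<in>A0. pi x (lam a) = lam (mul x a)"
  shows "weak_commutant sH ip (lam ` A0) (pi ` UNIV) = weak_commutant sH ip (lam ` A0) (pi ` A0)"
proof -
  obtain p where p: "seminorm_on sA A0 p" "cont_seminorm_on P A0 p"
    and p_bound: "\<forall>a\<in>A0. Re (\<omega>0 (mul (star a) a)) \<le> (p a)\<^sup>2"
    using w0_bound by blast
  have "\<forall>x\<in>A0. \<forall>y\<in>A0. mul x y \<in> A0"
    using qa unfolding lc_quasi_star_algebra_unit_def by (elim conjE) assumption
  moreover have "\<forall>x\<in>A0. star x \<in> A0"
    using qa unfolding lc_quasi_star_algebra_unit_def by (elim conjE) assumption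
  ultimately have bound: "\<forall>a\<in>A0. Re (\<omega> (mul (star a) a)) \<le> (p a)\<^sup>2"
    using p_bound w_ext by simp
  interpret gns_construction sA A0 star mul e P p \<omega> sH ip lam pi
    by (intro gns_construction.intro qa p bound w_lin w_cont H lam_lin lam_dense lam_ip pi_def)
  show ?thesis
    by (rule weak_commutant_pi_eq)
qed

end
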